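(* Let $\tau\in\mathbb R$ and let $(\vartheta(s),\omega(s))$, $s\in J$ ($J$ an interval containing $0$), be a $C^1$ solution with $\vartheta(s)\in(-\pi/2,\pi/2)$ of Hamilton's equations for $H(\vartheta,\omega)=\frac12(\omega^2+\tau^2\tan^2\vartheta)$, namely $\dot\vartheta=\omega$, $\dot\omega=-\tau^2\tan\vartheta/\cos^2\vartheta$, with $\vartheta(0)=0$. Let $E\ge0$ be defined by $E^2=2H(\vartheta(s),\omega(s))$ (a constant along the solution), assume $E^2+\tau^2>0$ and set $\Omega=\sqrt{E^2+\tau^2}$. Then $\sin^2\vartheta(s)=\frac{E^2}{\Omega^2}\sin^2(\Omega s)$ for all $s\in J$. *)

theory Defs
  imports "HOL-Analysis.Analysis"
begin

definition hamH :: "real \<Rightarrow> real \<Rightarrow> real \<Rightarrow> real" where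
  "hamH \<tau> th w = (w^2 + \<tau>^2 * (tan th)^2) / 2"

end

theory Submission
  imports Defs
begin

text \<open>
  Conservation of \<open>H\<close> gives \<open>\<omega>\<^sup>2 = E\<^sup>2 - \<tau>\<^sup>2 tan\<^sup>2 \<vartheta>\<close>. With this, \<open>y = sin \<vartheta>\<close> has
  \<open>y' = cos \<vartheta> \<omega>\<close> and \<open>y'' = -(E\<^sup>2 + \<tau>\<^sup>2) y\<close>, because \<open>1 + tan\<^sup>2 = 1 / cos\<^sup>2\<close>. So \<open>y\<close> solves the
  harmonic oscillator with frequency \<open>\<Omega>\<close> and initial data \<open>y(0) = 0\<close>, \<open>y'(0) = \<omega>(0) = \<plusminus>E\<close>,
  and uniqueness of such solutions (via the conserved oscillator energy of the difference)
  gives \<open>sin \<vartheta>(s) = \<omega>(0) sin(\<Omega> s) / \<Omega>\<close>.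
\<close>

lemma oscillator_energy_const:
  fixes u v :: "real \<Rightarrow> real" and \<Omega> :: real
  assumes J: "is_interval J"
    and u': "\<And>s. s \<in> J \<Longrightarrow> (u has_real_derivative v s) (at s within J)"
    and v': "\<And>s. s \<in> J \<Longrightarrow> (v has_real_derivative - (\<Omega>^2 * u s)) (at s within J)"
    and "s \<in> J" "t \<in> J"
  shows "v s ^ 2 + \<Omega>^2 * u s ^ 2 = v t ^ 2 + \<Omega>^2 * u t ^ 2"
proof -
  have "((\<lambda>s. v s ^ 2 + \<Omega>^2 * u s ^ 2) has_real_derivative 0) (at s within J)"
    if "s \<in> J" for s
    using DERIV_add[OF DERIV_power[OF v'[OF that], of 2]
        DERIV_cmult[OF DERIV_power[OF u'[OF that], of 2], of "\<Omega>^2"]]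
    by (simp add: algebra_simps)
  from has_field_derivative_zero_constant[OF is_interval_convex[OF J] this] obtain c
    where "\<And>s. s \<in> J \<Longrightarrow> v s ^ 2 + \<Omega>^2 * u s ^ 2 = c" by blast
  with \<open>s \<in> J\<close> \<open>t \<in> J\<close> show ?thesis by simp
qed

lemma oscillator_solution:
  fixes y z :: "real \<Rightarrow> real" and \<Omega> :: real
  assumes J: "is_interval J" "0 \<in> J" and \<Omega>: "\<Omega> > 0"
    and y': "\<And>s. s \<in> J \<Longrightarrow> (y has_real_derivative z s) (at s within J)"
    and z': "\<And>s. s \<in> J \<Longrightarrow> (z has_real_derivative - (\<Omega>^2 * y s)) (at s within J)"
    and s: "s \<in> J"
  shows "y s = y 0 * cos (\<Omega> * s) + z 0 / \<Omega> * sin (\<Omega> * s)"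
proof -
  define Y where "Y s = y 0 * cos (\<Omega> * s) + z 0 / \<Omega> * sin (\<Omega> * s)" for s
  define Z where "Z s = z 0 * cos (\<Omega> * s) - y 0 * \<Omega> * sin (\<Omega> * s)" for s
  have Y': "(Y has_real_derivative Z s) (at s within J)" for s
    unfolding Y_def Z_def using \<Omega>
    by (auto intro!: derivative_eq_intros simp: field_simps)
  have Z': "(Z has_real_derivative - (\<Omega>^2 * Y s)) (at s within J)" for s
    unfolding Y_def Z_def using \<Omega>
    by (auto intro!: derivative_eq_intros simp: field_simps power2_eq_square)
  have "(z s - Z s) ^ 2 + \<Omega>^2 * (y s - Y s) ^ 2 = (z 0 - Z 0) ^ 2 + \<Omega>^2 * (y 0 - Y 0) ^ 2"
  proof (rule oscillator_energy_const[OF J(1) _ _ s J(2)])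
    show "((\<lambda>s. y s - Y s) has_real_derivative z s - Z s) (at s within J)" if "s \<in> J" for s
      using DERIV_diff[OF y'[OF that] Y'] .
    show "((\<lambda>s. z s - Z s) has_real_derivative - (\<Omega>^2 * (y s - Y s))) (at s within J)"
      if "s \<in> J" for s
      using DERIV_diff[OF z'[OF that] Z'] by (simp add: algebra_simps)
  qed
  also have "\<dots> = 0" by (simp add: Y_def Z_def)
  finally have "y s = Y s" using \<Omega> by (simp add: add_nonneg_eq_0_iff)
  then show ?thesis by (simp add: Y_def)
qed

lemma hamH_conserved:
  fixes \<tau> :: real and th w :: "real \<Rightarrow> real"
  assumes J: "is_interval J"
    and cos: "\<And>s. s \<in> J \<Longrightarrow> cos (th s) \<noteq> 0"
    and th': "\<And>s. s \<in> J \<Longrightarrow> (th has_real_derivative w s) (at s within J)"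
    and w': "\<And>s. s \<in> J \<Longrightarrow>
               (w has_real_derivative (- (\<tau>^2 * tan (th s) / (cos (th s))^2))) (at s within J)"
    and "s \<in> J" "t \<in> J"
  shows "hamH \<tau> (th s) (w s) = hamH \<tau> (th t) (w t)"
proof -
  have "((\<lambda>s. w s ^ 2 + \<tau>^2 * tan (th s) ^ 2) has_real_derivative 0) (at s within J)"
    if s: "s \<in> J" for s
    by (rule derivative_eq_intros th'[OF s] w'[OF s] refl cos[OF s])+
      (use cos[OF s] in \<open>simp add: field_simps power2_eq_square\<close>)
  from has_field_derivative_zero_constant[OF is_interval_convex[OF J] this] obtain c
    where "\<And>s. s \<in> J \<Longrightarrow> w s ^ 2 + \<tau>^2 * tan (th s) ^ 2 = c" by blast
  with \<open>s \<in> J\<close> \<open>t \<in> J\<close> show ?thesis by (simp add: hamH_def)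
qed

lemma has_real_derivative_cos_angle_momentum:
  fixes \<tau> :: real and th w :: "real \<Rightarrow> real"
  assumes cos: "cos (th s) \<noteq> 0"
    and th': "(th has_real_derivative w s) (at s within J)"
    and w': "(w has_real_derivative (- (\<tau>^2 * tan (th s) / (cos (th s))^2))) (at s within J)"
  shows "((\<lambda>s. cos (th s) * w s) has_real_derivative
           - ((2 * hamH \<tau> (th s) (w s) + \<tau>^2) * sin (th s))) (at s within J)"
proof -
  have "((\<lambda>s. cos (th s) * w s) has_real_derivative
           - sin (th s) * w s * w s + - (\<tau>^2 * tan (th s) / cos (th s) ^ 2) * cos (th s))
         (at s within J)"
    by (rule derivative_eq_intros th' w' refl)+
  moreover have "- sin (th s) * w s * w s + - (\<tau>^2 * tan (th s) / cos (th s) ^ 2) * cos (th s)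
      = - ((2 * hamH \<tau> (th s) (w s) + \<tau>^2) * sin (th s))"
  proof -
    have tan_term: "- (\<tau>^2 * tan (th s) / cos (th s) ^ 2) * cos (th s)
        = - (\<tau>^2 * (sin (th s) * (1 + tan (th s) ^ 2)))"
      unfolding tan_sec[OF cos] using cos by (simp add: tan_def power2_eq_square field_simps)
    show ?thesis unfolding tan_term hamH_def by (simp add: algebra_simps power2_eq_square)
  qed
  ultimately show ?thesis by simp
qed

theorem lemma4p12:
  fixes \<tau> E :: real and J :: "real set" and th w :: "real \<Rightarrow> real"
  assumes J: "is_interval J" "0 \<in> J"
    and C1: "continuous_on J th" "continuous_on J w"
    and range: "\<And>s. s \<in> J \<Longrightarrow> th s \<in> {-pi/2<..<pi/2}"
    and eq1: "\<And>s. s \<in> J \<Longrightarrow> (th has_real_derivative w s) (at s within J)"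
    and eq2: "\<And>s. s \<in> J \<Longrightarrow>
               (w has_real_derivative (- (\<tau>^2 * tan (th s) / (cos (th s))^2))) (at s within J)"
    and init: "th 0 = 0"
    and E: "E \<ge> 0" "E^2 = 2 * hamH \<tau> (th 0) (w 0)"
    and pos: "E^2 + \<tau>^2 > 0"
  shows "\<forall>s\<in>J. (sin (th s))^2
           = E^2 / (sqrt (E^2 + \<tau>^2))^2 * (sin (sqrt (E^2 + \<tau>^2) * s))^2"
proof
  fix s assume s: "s \<in> J"
  define \<Omega> where "\<Omega> = sqrt (E^2 + \<tau>^2)"
  have \<Omega>: "\<Omega> > 0" "\<Omega>^2 = E^2 + \<tau>^2" using pos by (simp_all add: \<Omega>_def)
  have cos: "cos (th t) \<noteq> 0" if "t \<in> J" for t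
    using range[OF that] cos_gt_zero_pi[of "th t"] by auto
  have sin': "((\<lambda>t. sin (th t)) has_real_derivative cos (th t) * w t) (at t within J)"
    if t: "t \<in> J" for t
    by (rule derivative_eq_intros eq1[OF t] refl)+
  have momentum': "((\<lambda>t. cos (th t) * w t) has_real_derivative - (\<Omega>^2 * sin (th t)))
      (at t within J)"
    if t: "t \<in> J" for t
    using has_real_derivative_cos_angle_momentum[OF cos[OF t] eq1[OF t] eq2[OF t]]
      hamH_conserved[OF J(1) cos eq1 eq2 t J(2)] E(2) \<Omega>(2) by simp
  from oscillator_solution[OF J \<Omega>(1) sin' momentum' s]
  have "sin (th s) = w 0 / \<Omega> * sin (\<Omega> * s)" using init by simp
  moreover have "E^2 = w 0 ^ 2" using E(2) init by (simp add: hamH_def)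
  ultimately show "(sin (th s))^2 = E^2 / (sqrt (E^2 + \<tau>^2))^2 * (sin (sqrt (E^2 + \<tau>^2) * s))^2"
    by (simp add: \<Omega>_def power_mult_distrib power_divide)
qed

end
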